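(* Let $AB$ be a non-signaling composite of probabilistic models $A$ and $B$, and let $\omega\in\Omega(AB)$ be steering for its $B$-marginal $\omega_2$. Then $\hat\omega(\mathbf{E}(A)_+)=\mathrm{Face}(\omega_2)$, where $\hat\omega:\mathbf{E}(A)\to\mathbf{V}(B)$ is the conditioning map $\hat\omega(a)(b)=\omega(a\otimes b)$ and $\mathrm{Face}(\omega_2)$ is the smallest face of the cone $\mathbf{V}(B)_+$ containing $\omega_2$.
   Context: Models are finite-dimensional and state-complete: each model $A$ has an ordered effect space $\mathbf{E}(A)$ (span of the evaluation functionals of its outcomes, positive cone $\mathbf{E}(A)_+$, order unit $u$), and $\mathbf{V}(A)=\mathbf{E}(A)^\ast$ ordered by the cone $\mathbf{V}(A)_+$ generated by the states; effects are $a$ with $0\le a\le u$, observables are finite sets of non-zero effects summing to $u$. A composite $AB$ is a model with an injective map $(x,y)\mapsto xy$ of outcomes such that products of tests are tests and products of states exist; it is non-signaling if every state has test-independent marginals and all conditional states lie in the component state spaces. In a non-signaling composite every state $\omega$ extends uniquely to a bilinear form $(a,b)\mapsto\omega(a\otimes b)$ on $\mathbf{E}(A)\times\mathbf{E}(B)$, with marginal $\omega_2(b)=\omega(u\otimes b)$. An ensemble for $\beta\in\Omega(B)$ is a finite family of un-normalized states $\beta_i\in\mathbf{V}(B)_+$ with $\sum_i\beta_i=\beta$. $\omega$ is steering for its $B$-marginal iff for every ensemble $\omega_2=\sum_i\beta_i$ there is an observable $\{a_i\}$ on $A$ with $\beta_i=\hat\omega(a_i)$ for all $i$. A face of a cone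 $K$ is a convex subcone $J\subseteq K$ such that $a+b\in J$ with $a,b\in K$ implies $a,b\in J$. *)

theory Defs
  imports Complex_Main
begin

text \<open>Probabilistic models: a test space (outcomes, tests) together with a set of
states (probability weights).  States are real-valued functions on outcomes,
vanishing off the outcome set.\<close>

record 'x model =
  outcomes :: "'x set"
  tests :: "'x set set"
  states :: "('x \<Rightarrow> real) set"

definition prob_weight :: "'x model \<Rightarrow> ('x \<Rightarrow> real) \<Rightarrow> bool" where
  "prob_weight A \<alpha> \<longleftrightarrow>
     (\<forall>x. x \<notin> outcomes A \<longrightarrow> \<alpha> x = 0) \<and>
     (\<forall>x \<in> outcomes A. 0 \<le> \<alpha> x) \<and>
     (\<forall>E \<in> tests A. (\<Sum>x\<in>E. \<alpha> x) = 1)"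

definition lin_span :: "('x \<Rightarrow> real) set \<Rightarrow> ('x \<Rightarrow> real) set" where
  "lin_span F = {(\<lambda>x. \<Sum>f\<in>S. t f * f x) | S t. finite S \<and> S \<subseteq> F}"

definition Vsp :: "'x model \<Rightarrow> ('x \<Rightarrow> real) set" where
  "Vsp A = lin_span (states A)"

definition Vpos :: "'x model \<Rightarrow> ('x \<Rightarrow> real) set" where
  "Vpos A = {(\<lambda>x. \<Sum>f\<in>S. t f * f x) | S t. finite S \<and> S \<subseteq> states A \<and> (\<forall>f\<in>S. 0 \<le> t f)}"

text \<open>Effects are linear functionals on V(A), represented as functions on V(A)
(extended by 0 outside V(A)); E(A) is spanned by the evaluation functionals
of outcomes.\<close>
definition eff :: "'x model \<Rightarrow> 'x set \<Rightarrow> ('x \<Rightarrow> real) \<Rightarrow> (('x \<Rightarrow> real) \<Rightarrow> real)" where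
  "eff A S c = (\<lambda>\<beta>. if \<beta> \<in> Vsp A then (\<Sum>x\<in>S. c x * \<beta> x) else 0)"

definition Esp :: "'x model \<Rightarrow> (('x \<Rightarrow> real) \<Rightarrow> real) set" where
  "Esp A = {eff A S c | S c. finite S \<and> S \<subseteq> outcomes A}"

definition Epos :: "'x model \<Rightarrow> (('x \<Rightarrow> real) \<Rightarrow> real) set" where
  "Epos A = {a \<in> Esp A. \<forall>\<alpha> \<in> states A. 0 \<le> a \<alpha>}"

text \<open>The order unit: sum of the evaluation functionals over any test.\<close>
definition unit_eff :: "'x model \<Rightarrow> (('x \<Rightarrow> real) \<Rightarrow> real)" where
  "unit_eff A = eff A (SOME E. E \<in> tests A) (\<lambda>_. 1)"

definition is_effect :: "'x model \<Rightarrow> (('x \<Rightarrow> real) \<Rightarrow> real) \<Rightarrow> bool" where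
  "is_effect A a \<longleftrightarrow> a \<in> Epos A \<and> (\<lambda>\<beta>. unit_eff A \<beta> - a \<beta>) \<in> Epos A"

definition observable :: "'x model \<Rightarrow> nat \<Rightarrow> (nat \<Rightarrow> (('x \<Rightarrow> real) \<Rightarrow> real)) \<Rightarrow> bool" where
  "observable A n a \<longleftrightarrow>
     (\<forall>i<n. is_effect A (a i) \<and> a i \<noteq> (\<lambda>_. 0)) \<and>
     (\<forall>\<beta>. (\<Sum>i<n. a i \<beta>) = unit_eff A \<beta>)"

definition state_complete :: "'x model \<Rightarrow> bool" where
  "state_complete A \<longleftrightarrow> (\<forall>\<beta> \<in> Vsp A. prob_weight A \<beta> \<longrightarrow> \<beta> \<in> states A)"

definition finite_dim :: "'x model \<Rightarrow> bool" where
  "finite_dim A \<longleftrightarrow> (\<exists>F. finite F \<and> F \<subseteq> states A \<and> states A \<subseteq> lin_span F)"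

definition is_model :: "'x model \<Rightarrow> bool" where
  "is_model A \<longleftrightarrow>
     tests A \<noteq> {} \<and> (\<forall>E \<in> tests A. E \<noteq> {} \<and> finite E) \<and>
     outcomes A = \<Union>(tests A) \<and>
     states A \<noteq> {} \<and> (\<forall>\<alpha> \<in> states A. prob_weight A \<alpha>) \<and>
     finite_dim A \<and> state_complete A"

text \<open>Composite AB with product map p : (x,y) \<mapsto> xy.\<close>
definition composite :: "'x model \<Rightarrow> 'y model \<Rightarrow> 'w model \<Rightarrow> ('x \<Rightarrow> 'y \<Rightarrow> 'w) \<Rightarrow> bool" where
  "composite A B AB p \<longleftrightarrow>
     is_model A \<and> is_model B \<and> is_model AB \<and>
     inj_on (\<lambda>(x, y). p x y) (outcomes A \<times> outcomes B) \<and>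
     (\<forall>x \<in> outcomes A. \<forall>y \<in> outcomes B. p x y \<in> outcomes AB) \<and>
     (\<forall>E \<in> tests A. \<forall>F \<in> tests B. {p x y | x y. x \<in> E \<and> y \<in> F} \<in> tests AB) \<and>
     (\<forall>\<alpha> \<in> states A. \<forall>\<beta> \<in> states B. \<exists>\<gamma> \<in> states AB.
        \<forall>x \<in> outcomes A. \<forall>y \<in> outcomes B. \<gamma> (p x y) = \<alpha> x * \<beta> y)"

text \<open>Marginals (computed with some test of the other factor).\<close>
definition marg1 :: "'x model \<Rightarrow> 'y model \<Rightarrow> ('x \<Rightarrow> 'y \<Rightarrow> 'w) \<Rightarrow> ('w \<Rightarrow> real) \<Rightarrow> ('x \<Rightarrow> real)" where
  "marg1 A B p \<omega> = (\<lambda>x. if x \<in> outcomes A then (\<Sum>y\<in>(SOME F. F \<in> tests B). \<omega> (p x y)) else 0)"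

definition marg2 :: "'x model \<Rightarrow> 'y model \<Rightarrow> ('x \<Rightarrow> 'y \<Rightarrow> 'w) \<Rightarrow> ('w \<Rightarrow> real) \<Rightarrow> ('y \<Rightarrow> real)" where
  "marg2 A B p \<omega> = (\<lambda>y. if y \<in> outcomes B then (\<Sum>x\<in>(SOME E. E \<in> tests A). \<omega> (p x y)) else 0)"

definition non_signaling :: "'x model \<Rightarrow> 'y model \<Rightarrow> 'w model \<Rightarrow> ('x \<Rightarrow> 'y \<Rightarrow> 'w) \<Rightarrow> bool" where
  "non_signaling A B AB p \<longleftrightarrow>
     composite A B AB p \<and>
     (\<forall>\<omega> \<in> states AB.
        (\<forall>E \<in> tests A. \<forall>E' \<in> tests A. \<forall>y \<in> outcomes B.
            (\<Sum>x\<in>E. \<omega> (p x y)) = (\<Sum>x\<in>E'. \<omega> (p x y))) \<and>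
        (\<forall>F \<in> tests B. \<forall>F' \<in> tests B. \<forall>x \<in> outcomes A.
            (\<Sum>y\<in>F. \<omega> (p x y)) = (\<Sum>y\<in>F'. \<omega> (p x y))) \<and>
        (\<forall>x \<in> outcomes A. marg1 A B p \<omega> x > 0 \<longrightarrow>
            (\<lambda>y. if y \<in> outcomes B then \<omega> (p x y) / marg1 A B p \<omega> x else 0) \<in> states B) \<and>
        (\<forall>y \<in> outcomes B. marg2 A B p \<omega> y > 0 \<longrightarrow>
            (\<lambda>x. if x \<in> outcomes A then \<omega> (p x y) / marg2 A B p \<omega> y else 0) \<in> states A))"

text \<open>Conditioning map \<omega>^ : E(A) \<rightarrow> V(B), \<omega>^(a)(y) = \<omega>(a \<otimes> y), via the
bilinear extension \<omega>(a \<otimes> y) = \<Sum> c_x \<omega>(xy) for a = \<Sum> c_x x^.\<close>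
definition cond_map :: "'x model \<Rightarrow> 'y model \<Rightarrow> ('x \<Rightarrow> 'y \<Rightarrow> 'w) \<Rightarrow> ('w \<Rightarrow> real)
    \<Rightarrow> (('x \<Rightarrow> real) \<Rightarrow> real) \<Rightarrow> ('y \<Rightarrow> real)" where
  "cond_map A B p \<omega> a =
     (let (S, c) = (SOME (S, c). finite S \<and> S \<subseteq> outcomes A \<and> a = eff A S c)
      in (\<lambda>y. if y \<in> outcomes B then (\<Sum>x\<in>S. c x * \<omega> (p x y)) else 0))"

definition steering :: "'x model \<Rightarrow> 'y model \<Rightarrow> ('x \<Rightarrow> 'y \<Rightarrow> 'w) \<Rightarrow> ('w \<Rightarrow> real) \<Rightarrow> bool" where
  "steering A B p \<omega> \<longleftrightarrow>
     (\<forall>n \<beta>. (\<forall>i<n. \<beta> i \<in> Vpos B \<and> \<beta> i \<noteq> (\<lambda>_. 0)) \<and>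
            (\<forall>y. (\<Sum>i<n. \<beta> i y) = marg2 A B p \<omega> y) \<longrightarrow>
        (\<exists>a. observable A n a \<and> (\<forall>i<n. \<beta> i = cond_map A B p \<omega> (a i))))"

definition is_face :: "('y \<Rightarrow> real) set \<Rightarrow> ('y \<Rightarrow> real) set \<Rightarrow> bool" where
  "is_face K J \<longleftrightarrow>
     J \<subseteq> K \<and> J \<noteq> {} \<and>
     (\<forall>a\<in>J. \<forall>b\<in>J. (\<lambda>y. a y + b y) \<in> J) \<and>
     (\<forall>a\<in>J. \<forall>t::real. 0 \<le> t \<longrightarrow> (\<lambda>y. t * a y) \<in> J) \<and>
     (\<forall>a\<in>K. \<forall>b\<in>K. (\<lambda>y. a y + b y) \<in> J \<longrightarrow> a \<in> J \<and> b \<in> J)"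

definition Face :: "('y \<Rightarrow> real) set \<Rightarrow> ('y \<Rightarrow> real) \<Rightarrow> ('y \<Rightarrow> real) set" where
  "Face K v = \<Inter>{J. is_face K J \<and> v \<in> J}"

end

theory Submission
  imports Defs
begin

text \<open>Every conditioned effect \<open>\<omega>(a \<otimes> -)\<close> is dominated by a multiple of the marginal
\<open>\<omega>\<^sub>2 = \<omega>(u \<otimes> -)\<close>, since \<open>0 \<le> \<omega>(xy) \<le> \<omega>\<^sub>2(y)\<close>; hence it lies in every face containing
\<open>\<omega>\<^sub>2\<close>. Conversely, steering makes the image of \<open>E(A)\<^sub>+\<close> a face itself: if \<open>\<beta> + \<beta>'\<close> is a
conditioned effect, then \<open>\<beta>\<close> is dominated by a multiple of \<open>\<omega>\<^sub>2\<close>; after rescaling so that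
\<open>\<beta> \<le> \<omega>\<^sub>2\<close>, the ensemble \<open>{\<beta>, \<omega>\<^sub>2 - \<beta>}\<close> is steered by a two-outcome observable on \<open>A\<close>,
whose first effect is mapped to \<open>\<beta>\<close>.\<close>

lemma lin_span_zero: "(\<lambda>x. 0) \<in> lin_span F"
  unfolding lin_span_def by (intro CollectI exI[where x="{}"] exI[where x="\<lambda>_. 0::real"]) simp

lemma lin_span_scale_mem: "f \<in> F \<Longrightarrow> (\<lambda>x. r * f x) \<in> lin_span F"
  unfolding lin_span_def by (intro CollectI exI[where x="{f}"] exI[where x="\<lambda>_. r"]) simp

lemma sum_restrict_coeff:
  fixes t :: "'a \<Rightarrow> real"
  assumes "finite U" "S \<subseteq> U"
  shows "(\<Sum>h\<in>U. (if h \<in> S then t h else 0) * g h) = (\<Sum>h\<in>S. t h * g h)"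
  using assms by (intro sum.mono_neutral_cong_right) auto

lemma lin_span_lin_comb:
  assumes "f \<in> lin_span F" "g \<in> lin_span F"
  shows "(\<lambda>x. r * f x + s * g x) \<in> lin_span F"
proof -
  obtain S t where S: "finite S" "S \<subseteq> F" "f = (\<lambda>x. \<Sum>h\<in>S. t h * h x)"
    using assms(1) unfolding lin_span_def by blast
  obtain S' t' where S': "finite S'" "S' \<subseteq> F" "g = (\<lambda>x. \<Sum>h\<in>S'. t' h * h x)"
    using assms(2) unfolding lin_span_def by blast
  define T where "T h = r * (if h \<in> S then t h else 0) + s * (if h \<in> S' then t' h else 0)" for h
  have "r * f x + s * g x = (\<Sum>h\<in>S \<union> S'. T h * h x)" for x
  proof -
    have "r * f x + s * g x = r * (\<Sum>h\<in>S \<union> S'. (if h \<in> S then t h else 0) * h x)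
        + s * (\<Sum>h\<in>S \<union> S'. (if h \<in> S' then t' h else 0) * h x)"
      using S S' by (simp add: sum_restrict_coeff)
    also have "\<dots> = (\<Sum>h\<in>S \<union> S'. T h * h x)"
      unfolding T_def by (simp add: sum_distrib_left sum.distrib distrib_right mult.assoc)
    finally show ?thesis .
  qed
  then show ?thesis unfolding lin_span_def using S S' by blast
qed

lemma lin_span_sum:
  assumes "finite I" "\<And>i. i \<in> I \<Longrightarrow> g i \<in> lin_span F"
  shows "(\<lambda>x. \<Sum>i\<in>I. g i x) \<in> lin_span F"
  using assms
proof (induction I rule: finite_induct)
  case empty
  then show ?case using lin_span_zero by simp
next
  case (insert i I)
  then have "(\<lambda>x. 1 * g i x + 1 * (\<Sum>j\<in>I. g j x)) \<in> lin_span F"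
    by (intro lin_span_lin_comb) auto
  then show ?case using insert by simp
qed

lemma some_test_in_tests: "is_model A \<Longrightarrow> (SOME E. E \<in> tests A) \<in> tests A"
  unfolding is_model_def by (metis ex_in_conv someI)

lemma model_test_finite: "is_model A \<Longrightarrow> E \<in> tests A \<Longrightarrow> finite E"
  unfolding is_model_def by blast

lemma model_test_subset: "is_model A \<Longrightarrow> E \<in> tests A \<Longrightarrow> E \<subseteq> outcomes A"
  unfolding is_model_def by blast

lemma model_outcome_in_test: "is_model A \<Longrightarrow> x \<in> outcomes A \<Longrightarrow> \<exists>E \<in> tests A. x \<in> E"
  unfolding is_model_def by blast

lemma states_subset_Vsp: "states A \<subseteq> Vsp A"
  unfolding Vsp_def using lin_span_scale_mem[of _ "states A" 1] by auto

lemma Vsp_lin_comb: "\<beta> \<in> Vsp A \<Longrightarrow> \<gamma> \<in> Vsp A \<Longrightarrow> (\<lambda>y. r * \<beta> y + s * \<gamma> y) \<in> Vsp A"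
  unfolding Vsp_def by (rule lin_span_lin_comb)

lemma Vsp_expand:
  assumes "\<beta> \<in> Vsp A"
  obtains S t where "finite S" "S \<subseteq> states A" "\<beta> = (\<lambda>y. \<Sum>\<alpha>\<in>S. t \<alpha> * \<alpha> y)"
  using assms unfolding Vsp_def lin_span_def by blast

lemma Vsp_vanishes_outside:
  assumes "is_model A" "\<beta> \<in> Vsp A" "y \<notin> outcomes A"
  shows "\<beta> y = 0"
proof -
  obtain S t where "S \<subseteq> states A" "\<beta> = (\<lambda>y. \<Sum>\<alpha>\<in>S. t \<alpha> * \<alpha> y)"
    using assms(2) by (rule Vsp_expand)
  then show ?thesis using assms(1,3) unfolding is_model_def prob_weight_def
    by (auto intro!: sum.neutral)
qed

lemma Vsp_test_sum_eq:
  assumes "is_model A" "\<beta> \<in> Vsp A" "E \<in> tests A" "E' \<in> tests A"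
  shows "(\<Sum>y\<in>E. \<beta> y) = (\<Sum>y\<in>E'. \<beta> y)"
proof -
  obtain S t where S: "S \<subseteq> states A" "\<beta> = (\<lambda>y. \<Sum>\<alpha>\<in>S. t \<alpha> * \<alpha> y)"
    using assms(2) by (rule Vsp_expand)
  have "(\<Sum>y\<in>F. \<beta> y) = (\<Sum>\<alpha>\<in>S. t \<alpha>)" if "F \<in> tests A" for F
  proof -
    have "(\<Sum>y\<in>F. \<beta> y) = (\<Sum>\<alpha>\<in>S. t \<alpha> * (\<Sum>y\<in>F. \<alpha> y))"
      unfolding S(2) by (simp add: sum_distrib_left sum.swap[of _ F S])
    also have "\<dots> = (\<Sum>\<alpha>\<in>S. t \<alpha>)"
      using S(1) assms(1) that unfolding is_model_def prob_weight_def by (intro sum.cong) auto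
    finally show ?thesis .
  qed
  then show ?thesis using assms(3,4) by simp
qed

lemma Vpos_scaled_state: "\<alpha> \<in> states A \<Longrightarrow> 0 \<le> t \<Longrightarrow> (\<lambda>y. t * \<alpha> y) \<in> Vpos A"
  unfolding Vpos_def by (intro CollectI exI[where x="{\<alpha>}"] exI[where x="\<lambda>_. t"]) simp

lemma Vpos_subset_Vsp: "Vpos A \<subseteq> Vsp A"
  unfolding Vpos_def Vsp_def lin_span_def by blast

lemma state_nonneg: "is_model A \<Longrightarrow> \<alpha> \<in> states A \<Longrightarrow> 0 \<le> \<alpha> y"
  unfolding is_model_def prob_weight_def by (cases "y \<in> outcomes A") auto

lemma Vpos_nonneg: "is_model A \<Longrightarrow> \<beta> \<in> Vpos A \<Longrightarrow> 0 \<le> \<beta> y"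
  unfolding Vpos_def using state_nonneg by (fastforce intro!: sum_nonneg)

lemma Vsp_nonneg_null_total:
  assumes A: "is_model A" and V: "\<beta> \<in> Vsp A" and nn: "\<And>y. y \<in> outcomes A \<Longrightarrow> 0 \<le> \<beta> y"
    and null: "\<And>F. F \<in> tests A \<Longrightarrow> (\<Sum>y\<in>F. \<beta> y) = 0"
  shows "\<beta> = (\<lambda>_. 0)"
proof
  fix y
  show "\<beta> y = 0"
  proof (cases "y \<in> outcomes A")
    case True
    then obtain F where F: "F \<in> tests A" "y \<in> F" using model_outcome_in_test[OF A] by blast
    have "\<forall>y\<in>F. 0 \<le> \<beta> y" using nn model_test_subset[OF A F(1)] by blast
    then show ?thesis
      using F null[OF F(1)] sum_nonneg_eq_0_iff[OF model_test_finite[OF A F(1)]] by blast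
  qed (use Vsp_vanishes_outside[OF A V] in auto)
qed

lemma Vsp_nonneg_normalized_state:
  assumes A: "is_model A" and V: "\<beta> \<in> Vsp A" and nn: "\<And>y. y \<in> outcomes A \<Longrightarrow> 0 \<le> \<beta> y"
    and total: "\<And>F. F \<in> tests A \<Longrightarrow> (\<Sum>y\<in>F. \<beta> y) = T" and T: "T > 0"
  shows "(\<lambda>y. \<beta> y / T) \<in> states A"
proof -
  have "(\<lambda>y. \<beta> y / T) \<in> Vsp A"
    using Vsp_lin_comb[OF V V, of "1/T" 0] by simp
  moreover have "prob_weight A (\<lambda>y. \<beta> y / T)"
    unfolding prob_weight_def
  proof (intro conjI ballI allI impI)
    show "\<beta> y / T = 0" if "y \<notin> outcomes A" for y
      using Vsp_vanishes_outside[OF A V that] by simp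
    show "0 \<le> \<beta> y / T" if "y \<in> outcomes A" for y
      using nn[OF that] T by simp
    show "(\<Sum>y\<in>F. \<beta> y / T) = 1" if "F \<in> tests A" for F
      using total[OF that] T by (simp add: sum_divide_distrib[symmetric])
  qed
  ultimately show ?thesis using A unfolding is_model_def state_complete_def by blast
qed

lemma Vpos_iff:
  assumes A: "is_model A"
  shows "\<beta> \<in> Vpos A \<longleftrightarrow> \<beta> \<in> Vsp A \<and> (\<forall>y \<in> outcomes A. 0 \<le> \<beta> y)"
proof
  assume "\<beta> \<in> Vpos A"
  then show "\<beta> \<in> Vsp A \<and> (\<forall>y \<in> outcomes A. 0 \<le> \<beta> y)"
    using Vpos_subset_Vsp Vpos_nonneg[OF A] by blast
next
  assume "\<beta> \<in> Vsp A \<and> (\<forall>y \<in> outcomes A. 0 \<le> \<beta> y)"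
  then have V: "\<beta> \<in> Vsp A" and nn: "\<And>y. y \<in> outcomes A \<Longrightarrow> 0 \<le> \<beta> y" by auto
  define F0 where "F0 = (SOME F. F \<in> tests A)"
  define T where "T = (\<Sum>y\<in>F0. \<beta> y)"
  have F0: "F0 \<in> tests A" unfolding F0_def using some_test_in_tests[OF A] .
  have total: "(\<Sum>y\<in>F. \<beta> y) = T" if "F \<in> tests A" for F
    unfolding T_def using Vsp_test_sum_eq[OF A V that F0] .
  have "0 \<le> T"
    unfolding T_def using nn model_test_subset[OF A F0] by (auto intro: sum_nonneg)
  then consider "T = 0" | "T > 0" by linarith
  then show "\<beta> \<in> Vpos A"
  proof cases
    case 1
    then have "\<beta> = (\<lambda>_. 0)" using Vsp_nonneg_null_total[OF A V nn] total by simp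
    moreover obtain \<alpha> where "\<alpha> \<in> states A" using A unfolding is_model_def by blast
    ultimately show ?thesis using Vpos_scaled_state[of \<alpha> A 0] by simp
  next
    case 2
    have "(\<lambda>y. T * (\<beta> y / T)) \<in> Vpos A"
      using Vsp_nonneg_normalized_state[OF A V nn total 2] 2 by (intro Vpos_scaled_state) simp_all
    moreover have "(\<lambda>y. T * (\<beta> y / T)) = \<beta>" using 2 by (simp add: fun_eq_iff)
    ultimately show ?thesis by simp
  qed
qed

text \<open>Any face containing \<open>v\<close> contains \<open>M v = a + (M v - a)\<close>, hence \<open>a\<close>.\<close>

lemma Face_eqI:
  assumes J: "is_face K J" "v \<in> J"
    and dominated: "\<And>a. a \<in> J \<Longrightarrow> \<exists>M \<ge> 0. (\<lambda>y. M * v y - a y) \<in> K"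
  shows "Face K v = J"
proof
  show "Face K v \<subseteq> J" unfolding Face_def using J by (intro Inter_lower) simp
  have "a \<in> J'" if a: "a \<in> J" and J': "is_face K J'" "v \<in> J'" for a J'
  proof -
    obtain M where M: "M \<ge> 0" "(\<lambda>y. M * v y - a y) \<in> K" using dominated[OF a] by blast
    have "(\<lambda>y. M * v y) \<in> J'" using J' M(1) unfolding is_face_def by blast
    then have sum_in: "(\<lambda>y. a y + (M * v y - a y)) \<in> J'" by simp
    have "a \<in> K" using a J(1) unfolding is_face_def by blast
    moreover have "\<forall>b\<in>K. \<forall>c\<in>K. (\<lambda>y. b y + c y) \<in> J' \<longrightarrow> b \<in> J' \<and> c \<in> J'"
      using J'(1) unfolding is_face_def by blast
    ultimately show "a \<in> J'" using M(2) sum_in by (meson bspec)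
  qed
  then show "J \<subseteq> Face K v" unfolding Face_def by blast
qed

lemma sum_union_coeff:
  fixes c c' :: "'a \<Rightarrow> real"
  assumes "finite S" "finite S'"
  shows "(\<Sum>x\<in>S \<union> S'. ((if x \<in> S then c x else 0) + (if x \<in> S' then c' x else 0)) * g x)
    = (\<Sum>x\<in>S. c x * g x) + (\<Sum>x\<in>S'. c' x * g x)"
  using sum_restrict_coeff[of "S \<union> S'" S c g] sum_restrict_coeff[of "S \<union> S'" S' c' g] assms
  by (simp add: distrib_right sum.distrib)

lemma eff_scale: "eff A S (\<lambda>x. r * c x) = (\<lambda>\<beta>. r * eff A S c \<beta>)"
  unfolding eff_def by (auto simp: sum_distrib_left mult.assoc)

lemma eff_union:
  "finite S \<Longrightarrow> finite S' \<Longrightarrow>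
    eff A (S \<union> S') (\<lambda>x. (if x \<in> S then c x else 0) + (if x \<in> S' then c' x else 0))
    = (\<lambda>\<beta>. eff A S c \<beta> + eff A S' c' \<beta>)"
  unfolding eff_def by (auto simp: sum_union_coeff)

lemma EposI:
  "finite S \<Longrightarrow> S \<subseteq> outcomes A \<Longrightarrow> \<forall>\<alpha>\<in>states A. 0 \<le> eff A S c \<alpha> \<Longrightarrow> eff A S c \<in> Epos A"
  unfolding Epos_def Esp_def by blast

lemma EposE:
  assumes "a \<in> Epos A"
  obtains S c where "finite S" "S \<subseteq> outcomes A" "a = eff A S c" "\<forall>\<alpha>\<in>states A. 0 \<le> eff A S c \<alpha>"
  using assms unfolding Epos_def Esp_def by blast

lemma eff_test_state: "is_model A \<Longrightarrow> E \<in> tests A \<Longrightarrow> \<alpha> \<in> states A \<Longrightarrow> eff A E (\<lambda>_. 1) \<alpha> = 1"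
  using states_subset_Vsp unfolding eff_def is_model_def prob_weight_def by auto

locale nonsignaling_state =
  fixes A :: "'x model" and B :: "'y model" and AB :: "'w model"
    and p :: "'x \<Rightarrow> 'y \<Rightarrow> 'w" and \<omega> :: "'w \<Rightarrow> real"
  assumes non_signaling: "non_signaling A B AB p" and state: "\<omega> \<in> states AB"
begin

abbreviation "\<omega>\<^sub>1 \<equiv> marg1 A B p \<omega>"
abbreviation "\<omega>\<^sub>2 \<equiv> marg2 A B p \<omega>"

lemma composite: "composite A B AB p"
  using non_signaling unfolding non_signaling_def by blast

lemma model_A: "is_model A" and model_B: "is_model B"
  using composite unfolding composite_def by blast+

lemma joint_nonneg: "x \<in> outcomes A \<Longrightarrow> y \<in> outcomes B \<Longrightarrow> 0 \<le> \<omega> (p x y)"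
  using composite state unfolding composite_def is_model_def prob_weight_def by blast

lemma non_signaling_conditions:
  "(\<forall>E \<in> tests A. \<forall>E' \<in> tests A. \<forall>y \<in> outcomes B.
      (\<Sum>x\<in>E. \<omega> (p x y)) = (\<Sum>x\<in>E'. \<omega> (p x y))) \<and>
   (\<forall>F \<in> tests B. \<forall>F' \<in> tests B. \<forall>x \<in> outcomes A.
      (\<Sum>y\<in>F. \<omega> (p x y)) = (\<Sum>y\<in>F'. \<omega> (p x y))) \<and>
   (\<forall>x \<in> outcomes A. \<omega>\<^sub>1 x > 0 \<longrightarrow>
      (\<lambda>y. if y \<in> outcomes B then \<omega> (p x y) / \<omega>\<^sub>1 x else 0) \<in> states B) \<and>
   (\<forall>y \<in> outcomes B. \<omega>\<^sub>2 y > 0 \<longrightarrow>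
      (\<lambda>x. if x \<in> outcomes A then \<omega> (p x y) / \<omega>\<^sub>2 y else 0) \<in> states A)"
  using non_signaling state unfolding non_signaling_def by blast

lemma marg2_test_sum:
  assumes "y \<in> outcomes B" "E \<in> tests A"
  shows "(\<Sum>x\<in>E. \<omega> (p x y)) = \<omega>\<^sub>2 y"
proof -
  have "(\<Sum>x\<in>E. \<omega> (p x y)) = (\<Sum>x\<in>(SOME E. E \<in> tests A). \<omega> (p x y))"
    using non_signaling_conditions some_test_in_tests[OF model_A] assms by blast
  then show ?thesis unfolding marg2_def using assms(1) by simp
qed

lemma marg1_test_sum:
  assumes "x \<in> outcomes A" "F \<in> tests B"
  shows "(\<Sum>y\<in>F. \<omega> (p x y)) = \<omega>\<^sub>1 x"
proof -
  have "(\<Sum>y\<in>F. \<omega> (p x y)) = (\<Sum>y\<in>(SOME F. F \<in> tests B). \<omega> (p x y))"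
    using non_signaling_conditions some_test_in_tests[OF model_B] assms by blast
  then show ?thesis unfolding marg1_def using assms(1) by simp
qed

lemma marg2_outside: "y \<notin> outcomes B \<Longrightarrow> \<omega>\<^sub>2 y = 0"
  unfolding marg2_def by simp

lemma joint_le_marg2:
  assumes "x \<in> outcomes A" "y \<in> outcomes B"
  shows "\<omega> (p x y) \<le> \<omega>\<^sub>2 y"
proof -
  obtain E where E: "E \<in> tests A" "x \<in> E" using model_outcome_in_test[OF model_A assms(1)] by blast
  have "\<omega> (p x y) \<le> (\<Sum>x\<in>E. \<omega> (p x y))"
    using E model_test_finite[OF model_A E(1)] model_test_subset[OF model_A E(1)] assms(2)
    by (intro member_le_sum joint_nonneg) auto
  then show ?thesis using marg2_test_sum[OF assms(2) E(1)] by simp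
qed

lemma joint_le_marg1:
  assumes "x \<in> outcomes A" "y \<in> outcomes B"
  shows "\<omega> (p x y) \<le> \<omega>\<^sub>1 x"
proof -
  obtain F where F: "F \<in> tests B" "y \<in> F" using model_outcome_in_test[OF model_B assms(2)] by blast
  have "\<omega> (p x y) \<le> (\<Sum>y\<in>F. \<omega> (p x y))"
    using F model_test_finite[OF model_B F(1)] model_test_subset[OF model_B F(1)] assms(1)
    by (intro member_le_sum joint_nonneg) auto
  then show ?thesis using marg1_test_sum[OF assms(1) F(1)] by simp
qed

lemma marg2_nonneg: "0 \<le> \<omega>\<^sub>2 y"
proof (cases "y \<in> outcomes B")
  case True
  obtain E where E: "E \<in> tests A" using some_test_in_tests[OF model_A] by blast
  have "0 \<le> (\<Sum>x\<in>E. \<omega> (p x y))"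
    using model_test_subset[OF model_A E] True by (intro sum_nonneg joint_nonneg) auto
  then show ?thesis using marg2_test_sum[OF True E] by simp
qed (simp add: marg2_outside)

definition cond_state_A :: "'y \<Rightarrow> 'x \<Rightarrow> real" where
  "cond_state_A y = (\<lambda>x. if x \<in> outcomes A then \<omega> (p x y) / \<omega>\<^sub>2 y else 0)"

definition cond_state_B :: "'x \<Rightarrow> 'y \<Rightarrow> real" where
  "cond_state_B x = (\<lambda>y. if y \<in> outcomes B then \<omega> (p x y) / \<omega>\<^sub>1 x else 0)"

lemma cond_state_A_state: "y \<in> outcomes B \<Longrightarrow> \<omega>\<^sub>2 y > 0 \<Longrightarrow> cond_state_A y \<in> states A"
  using non_signaling_conditions unfolding cond_state_A_def by blast

lemma cond_state_B_state: "x \<in> outcomes A \<Longrightarrow> \<omega>\<^sub>1 x > 0 \<Longrightarrow> cond_state_B x \<in> states B"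
  using non_signaling_conditions unfolding cond_state_B_def by blast

text \<open>\<open>omega_hat S c\<close> is the conditioned effect \<open>\<omega>(a \<otimes> -)\<close> for \<open>a = eff A S c\<close>. As \<open>cond_map\<close>
chooses the representation of \<open>a\<close> by \<open>SOME\<close>, everything rests on independence of the
representation, which the identity \<open>\<omega>(a \<otimes> y) = \<omega>\<^sub>2(y) a(\<omega>\<^sub>y)\<close>, with \<open>\<omega>\<^sub>y\<close> the conditional
state of \<open>A\<close> given \<open>y\<close>, provides.\<close>

definition omega_hat :: "'x set \<Rightarrow> ('x \<Rightarrow> real) \<Rightarrow> 'y \<Rightarrow> real" where
  "omega_hat S c = (\<lambda>y. if y \<in> outcomes B then (\<Sum>x\<in>S. c x * \<omega> (p x y)) else 0)"

lemma omega_hat_eq_eff_cond_state: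
  assumes y: "y \<in> outcomes B" and S: "S \<subseteq> outcomes A"
  shows "omega_hat S c y = \<omega>\<^sub>2 y * eff A S c (cond_state_A y)"
proof (cases "\<omega>\<^sub>2 y = 0")
  case True
  then have "\<omega> (p x y) = 0" if "x \<in> outcomes A" for x
    using joint_nonneg[OF that y] joint_le_marg2[OF that y] by simp
  then show ?thesis unfolding omega_hat_def using y S True by (auto intro!: sum.neutral)
next
  case False
  then have pos: "\<omega>\<^sub>2 y > 0" using marg2_nonneg[of y] by simp
  then have "cond_state_A y \<in> Vsp A" using cond_state_A_state[OF y] states_subset_Vsp by blast
  then have "\<omega>\<^sub>2 y * eff A S c (cond_state_A y) = (\<Sum>x\<in>S. \<omega>\<^sub>2 y * (c x * cond_state_A y x))"
    by (simp add: eff_def sum_distrib_left)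
  also have "\<dots> = (\<Sum>x\<in>S. c x * \<omega> (p x y))"
    using S pos by (intro sum.cong) (auto simp: cond_state_A_def)
  finally have "\<omega>\<^sub>2 y * eff A S c (cond_state_A y) = (\<Sum>x\<in>S. c x * \<omega> (p x y))" .
  then show ?thesis unfolding omega_hat_def using y by simp
qed

lemma cond_map_eff:
  assumes S: "finite S" "S \<subseteq> outcomes A"
  shows "cond_map A B p \<omega> (eff A S c) = omega_hat S c"
proof -
  let ?R = "\<lambda>(S', c'). finite S' \<and> S' \<subseteq> outcomes A \<and> eff A S c = eff A S' c'"
  obtain S' c' where some: "(SOME r. ?R r) = (S', c')" by (cases "SOME r. ?R r")
  have "?R (S, c)" using S by simp
  then have "?R (SOME r. ?R r)" by (rule someI)
  then have "?R (S', c')" unfolding some .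
  then have "omega_hat S' c' = omega_hat S c"
    using S omega_hat_eq_eff_cond_state unfolding omega_hat_def by (auto simp: fun_eq_iff)
  then show ?thesis unfolding cond_map_def some omega_hat_def by simp
qed

lemma omega_hat_nonneg:
  assumes S: "S \<subseteq> outcomes A" and nonneg: "\<forall>\<alpha>\<in>states A. 0 \<le> eff A S c \<alpha>"
  shows "0 \<le> omega_hat S c y"
proof (cases "y \<in> outcomes B \<and> \<omega>\<^sub>2 y > 0")
  case True
  then show ?thesis
    using omega_hat_eq_eff_cond_state[OF _ S] nonneg cond_state_A_state by simp
next
  case False
  then show ?thesis
    using omega_hat_eq_eff_cond_state[OF _ S] marg2_nonneg[of y]
    by (cases "y \<in> outcomes B") (auto simp: omega_hat_def)
qed

lemma omega_hat_le_marg2: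
  assumes "S \<subseteq> outcomes A"
  shows "omega_hat S c y \<le> (\<Sum>x\<in>S. \<bar>c x\<bar>) * \<omega>\<^sub>2 y"
proof (cases "y \<in> outcomes B")
  case True
  have "c x * \<omega> (p x y) \<le> \<bar>c x\<bar> * \<omega>\<^sub>2 y" if "x \<in> S" for x
  proof -
    have x: "x \<in> outcomes A" using assms that by blast
    have "c x * \<omega> (p x y) \<le> \<bar>c x\<bar> * \<omega> (p x y)"
      using joint_nonneg[OF x True] by (intro mult_right_mono) auto
    also have "\<dots> \<le> \<bar>c x\<bar> * \<omega>\<^sub>2 y"
      using joint_le_marg2[OF x True] by (intro mult_left_mono) auto
    finally show ?thesis .
  qed
  then show ?thesis unfolding omega_hat_def using True by (simp add: sum_distrib_right sum_mono)
qed (simp add: omega_hat_def marg2_outside)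

text \<open>\<open>omega_hat S c\<close> lands in \<open>V(B)\<close> because each column \<open>y \<mapsto> \<omega>(xy)\<close> is a multiple of the
conditional state of \<open>B\<close> given \<open>x\<close> (or vanishes when \<open>\<omega>\<^sub>1 x = 0\<close>).\<close>

lemma omega_hat_Vsp:
  assumes S: "finite S" "S \<subseteq> outcomes A"
  shows "omega_hat S c \<in> Vsp B"
proof -
  define g where "g x = (\<lambda>y. (c x * \<omega>\<^sub>1 x) * cond_state_B x y)" for x
  have "g x \<in> lin_span (states B)" if "x \<in> S" for x
  proof (cases "\<omega>\<^sub>1 x > 0")
    case True
    then show ?thesis
      unfolding g_def using cond_state_B_state S that by (blast intro: lin_span_scale_mem)
  next
    case False
    then have "g x = (\<lambda>y. 0)"
      using joint_nonneg joint_le_marg1 S that unfolding g_def cond_state_B_def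
      by (fastforce simp: fun_eq_iff)
    then show ?thesis using lin_span_zero by simp
  qed
  moreover have "omega_hat S c = (\<lambda>y. \<Sum>x\<in>S. g x y)"
  proof
    fix y
    have "c x * \<omega> (p x y) = g x y" if "x \<in> S" "y \<in> outcomes B" for x
      using joint_nonneg joint_le_marg1 S that unfolding g_def cond_state_B_def
      by (cases "\<omega>\<^sub>1 x > 0") force+
    then show "omega_hat S c y = (\<Sum>x\<in>S. g x y)"
      unfolding omega_hat_def by (auto simp: g_def cond_state_B_def)
  qed
  ultimately show ?thesis unfolding Vsp_def using S(1) by (simp add: lin_span_sum)
qed

lemma omega_hat_test: "E \<in> tests A \<Longrightarrow> omega_hat E (\<lambda>_. r) = (\<lambda>y. r * \<omega>\<^sub>2 y)"
  using marg2_test_sum marg2_outside by (auto simp: omega_hat_def fun_eq_iff sum_distrib_left[symmetric])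

lemma marg2_Vsp: "\<omega>\<^sub>2 \<in> Vsp B"
proof -
  obtain E where E: "E \<in> tests A" using some_test_in_tests[OF model_A] by blast
  show ?thesis
    using omega_hat_Vsp[of E "\<lambda>_. 1"] omega_hat_test[OF E, of 1]
      model_test_finite[OF model_A E] model_test_subset[OF model_A E] by simp
qed

abbreviation "cond_cone \<equiv> cond_map A B p \<omega> ` Epos A"

lemma cond_coneE:
  assumes "\<beta> \<in> cond_cone"
  obtains S c where "finite S" "S \<subseteq> outcomes A" "\<forall>\<alpha>\<in>states A. 0 \<le> eff A S c \<alpha>"
    "\<beta> = omega_hat S c"
proof -
  obtain a where a: "a \<in> Epos A" "\<beta> = cond_map A B p \<omega> a" using assms by blast
  from a(1) obtain S c where S: "finite S" "S \<subseteq> outcomes A" "a = eff A S c"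
    "\<forall>\<alpha>\<in>states A. 0 \<le> eff A S c \<alpha>"
    by (rule EposE)
  then show ?thesis using that a(2) cond_map_eff[OF S(1,2)] by simp
qed

lemma omega_hat_in_cond_cone:
  assumes "finite S" "S \<subseteq> outcomes A" "\<forall>\<alpha>\<in>states A. 0 \<le> eff A S c \<alpha>"
  shows "omega_hat S c \<in> cond_cone"
proof -
  have "eff A S c \<in> Epos A" using assms by (rule EposI)
  moreover have "omega_hat S c = cond_map A B p \<omega> (eff A S c)"
    using cond_map_eff[OF assms(1,2)] by simp
  ultimately show ?thesis by blast
qed

lemma cond_cone_subset_Vpos: "cond_cone \<subseteq> Vpos B"
proof
  fix \<beta> assume "\<beta> \<in> cond_cone"
  then obtain S c where "finite S" "S \<subseteq> outcomes A" "\<forall>\<alpha>\<in>states A. 0 \<le> eff A S c \<alpha>"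
    "\<beta> = omega_hat S c"
    by (rule cond_coneE)
  then show "\<beta> \<in> Vpos B" using Vpos_iff[OF model_B] omega_hat_Vsp omega_hat_nonneg by simp
qed

lemma zero_in_cond_cone: "(\<lambda>_. 0) \<in> cond_cone"
proof -
  have "omega_hat {} (\<lambda>_. 0) = (\<lambda>_. 0)" by (simp add: omega_hat_def fun_eq_iff)
  moreover have "\<forall>\<alpha>\<in>states A. 0 \<le> eff A {} (\<lambda>_. 0) \<alpha>" by (simp add: eff_def)
  ultimately show ?thesis using omega_hat_in_cond_cone[of "{}" "\<lambda>_. 0"] by simp
qed

lemma scaled_marg2_in_cond_cone:
  assumes "0 \<le> r"
  shows "(\<lambda>y. r * \<omega>\<^sub>2 y) \<in> cond_cone"
proof -
  obtain E where E: "E \<in> tests A" using some_test_in_tests[OF model_A] by blast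
  have "\<forall>\<alpha>\<in>states A. 0 \<le> eff A E (\<lambda>_. r) \<alpha>"
    using eff_scale[of A E r "\<lambda>_. 1"] eff_test_state[OF model_A E] assms by simp
  then show ?thesis
    using omega_hat_in_cond_cone[of E "\<lambda>_. r"] omega_hat_test[OF E]
      model_test_finite[OF model_A E] model_test_subset[OF model_A E] by simp
qed

lemma omega_hat_scale: "omega_hat S (\<lambda>x. t * c x) = (\<lambda>y. t * omega_hat S c y)"
  by (simp add: omega_hat_def fun_eq_iff sum_distrib_left mult.assoc)

lemma cond_cone_scale:
  assumes "\<beta> \<in> cond_cone" "0 \<le> t"
  shows "(\<lambda>y. t * \<beta> y) \<in> cond_cone"
proof -
  obtain S c where S: "finite S" "S \<subseteq> outcomes A" "\<forall>\<alpha>\<in>states A. 0 \<le> eff A S c \<alpha>"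
    "\<beta> = omega_hat S c"
    using assms(1) by (rule cond_coneE)
  then show ?thesis
    using omega_hat_in_cond_cone[of S "\<lambda>x. t * c x"] assms(2) by (simp add: eff_scale omega_hat_scale)
qed

lemma cond_cone_add:
  assumes "\<beta> \<in> cond_cone" "\<beta>' \<in> cond_cone"
  shows "(\<lambda>y. \<beta> y + \<beta>' y) \<in> cond_cone"
proof -
  obtain S c where S: "finite S" "S \<subseteq> outcomes A" "\<forall>\<alpha>\<in>states A. 0 \<le> eff A S c \<alpha>"
    "\<beta> = omega_hat S c"
    using assms(1) by (rule cond_coneE)
  obtain S' c' where S': "finite S'" "S' \<subseteq> outcomes A" "\<forall>\<alpha>\<in>states A. 0 \<le> eff A S' c' \<alpha>"
    "\<beta>' = omega_hat S' c'"
    using assms(2) by (rule cond_coneE)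
  define d where "d x = (if x \<in> S then c x else 0) + (if x \<in> S' then c' x else 0)" for x
  have "omega_hat (S \<union> S') d = (\<lambda>y. \<beta> y + \<beta>' y)"
    unfolding S(4) S'(4) omega_hat_def d_def using S(1) S'(1) by (auto simp: sum_union_coeff)
  moreover have "eff A (S \<union> S') d = (\<lambda>\<alpha>. eff A S c \<alpha> + eff A S' c' \<alpha>)"
    unfolding d_def using S(1) S'(1) by (rule eff_union)
  ultimately show ?thesis
    using omega_hat_in_cond_cone[of "S \<union> S'" d] S S' by simp
qed

lemma cond_cone_dominated:
  assumes "\<beta> \<in> cond_cone"
  shows "\<exists>M \<ge> 0. (\<lambda>y. M * \<omega>\<^sub>2 y - \<beta> y) \<in> Vpos B"
proof -
  obtain S c where S: "finite S" "S \<subseteq> outcomes A" "\<beta> = omega_hat S c"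
    using assms by (elim cond_coneE)
  define M where "M = (\<Sum>x\<in>S. \<bar>c x\<bar>)"
  have "(\<lambda>y. M * \<omega>\<^sub>2 y + (-1) * \<beta> y) \<in> Vsp B"
    using Vsp_lin_comb marg2_Vsp omega_hat_Vsp[OF S(1,2)] S(3) by blast
  moreover have "0 \<le> M * \<omega>\<^sub>2 y - \<beta> y" for y
    using omega_hat_le_marg2[OF S(2)] S(3) unfolding M_def by simp
  ultimately have "(\<lambda>y. M * \<omega>\<^sub>2 y - \<beta> y) \<in> Vpos B"
    using Vpos_iff[OF model_B] by simp
  moreover have "0 \<le> M" unfolding M_def by (simp add: sum_nonneg)
  ultimately show ?thesis by blast
qed

lemma marg2_in_cond_cone: "\<omega>\<^sub>2 \<in> cond_cone"
  using scaled_marg2_in_cond_cone[of 1] by simp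

end

locale steering_state = nonsignaling_state +
  assumes steering: "steering A B p \<omega>"
begin

text \<open>Where steering enters: a non-zero \<open>\<beta> \<le> \<omega>\<^sub>2\<close> with non-zero remainder splits \<open>\<omega>\<^sub>2\<close> into a
two-element ensemble, which is realized by a two-outcome observable on \<open>A\<close>.\<close>

lemma below_marg2_in_cond_cone:
  assumes \<beta>: "\<beta> \<in> Vpos B" and le: "\<And>y. \<beta> y \<le> \<omega>\<^sub>2 y"
  shows "\<beta> \<in> cond_cone"
proof -
  define \<gamma> where "\<gamma> y = \<omega>\<^sub>2 y - \<beta> y" for y
  have "\<gamma> \<in> Vsp B"
    using Vsp_lin_comb[OF marg2_Vsp Vpos_iff[OF model_B, THEN iffD1, OF \<beta>, THEN conjunct1], of 1 "-1"]
    unfolding \<gamma>_def by simp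
  then have \<gamma>: "\<gamma> \<in> Vpos B" using le Vpos_iff[OF model_B] unfolding \<gamma>_def by simp
  consider "\<beta> = (\<lambda>_. 0)" | "\<gamma> = (\<lambda>_. 0)" | "\<beta> \<noteq> (\<lambda>_. 0)" "\<gamma> \<noteq> (\<lambda>_. 0)" by blast
  then show ?thesis
  proof cases
    case 1
    then show ?thesis using zero_in_cond_cone by simp
  next
    case 2
    then have "\<beta> = \<omega>\<^sub>2" unfolding \<gamma>_def by (simp add: fun_eq_iff)
    then show ?thesis using marg2_in_cond_cone by simp
  next
    case 3
    define ens where "ens i = (if i = 0 then \<beta> else \<gamma>)" for i :: nat
    have "\<forall>i<2. ens i \<in> Vpos B \<and> ens i \<noteq> (\<lambda>_. 0)"
      using \<beta> \<gamma> 3 unfolding ens_def by auto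
    moreover have "\<forall>y. (\<Sum>i<2. ens i y) = \<omega>\<^sub>2 y"
      unfolding ens_def \<gamma>_def by (simp add: numeral_2_eq_2)
    ultimately obtain a where a: "observable A 2 a" "\<forall>i<2. ens i = cond_map A B p \<omega> (a i)"
      using steering unfolding steering_def by blast
    then have "a 0 \<in> Epos A" unfolding observable_def is_effect_def by auto
    moreover have "\<beta> = cond_map A B p \<omega> (a 0)" using a(2)[rule_format, of 0] unfolding ens_def by simp
    ultimately show ?thesis by blast
  qed
qed

lemma cond_cone_hereditary:
  assumes \<beta>: "\<beta> \<in> Vpos B" and \<beta>': "\<beta>' \<in> Vpos B" and sum: "(\<lambda>y. \<beta> y + \<beta>' y) \<in> cond_cone"
  shows "\<beta> \<in> cond_cone"
proof -
  obtain M where M: "M \<ge> 0" "(\<lambda>y. M * \<omega>\<^sub>2 y - (\<beta> y + \<beta>' y)) \<in> Vpos B"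
    using cond_cone_dominated[OF sum] by blast
  have bound: "\<beta> y \<le> (M + 1) * \<omega>\<^sub>2 y" for y
    using Vpos_nonneg[OF model_B M(2), of y] Vpos_nonneg[OF model_B \<beta>', of y] marg2_nonneg[of y]
    by (simp add: distrib_right)
  define \<delta> where "\<delta> y = \<beta> y / (M + 1)" for y
  have "\<delta> \<in> Vsp B"
    using Vsp_lin_comb[of \<beta> B \<beta> "1 / (M + 1)" 0] Vpos_subset_Vsp \<beta> unfolding \<delta>_def by auto
  then have "\<delta> \<in> Vpos B"
    using Vpos_iff[OF model_B] Vpos_nonneg[OF model_B \<beta>] M(1) unfolding \<delta>_def by simp
  moreover have "\<delta> y \<le> \<omega>\<^sub>2 y" for y
    using bound[of y] M(1) unfolding \<delta>_def by (simp add: divide_le_eq mult.commute)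
  ultimately have "\<delta> \<in> cond_cone" by (rule below_marg2_in_cond_cone)
  then have "(\<lambda>y. (M + 1) * \<delta> y) \<in> cond_cone" using cond_cone_scale M(1) by simp
  then show ?thesis using M(1) unfolding \<delta>_def by simp
qed

lemma cond_cone_is_face: "is_face (Vpos B) cond_cone"
  unfolding is_face_def
proof (intro conjI ballI allI impI)
  show "cond_cone \<subseteq> Vpos B" by (rule cond_cone_subset_Vpos)
  show "cond_cone \<noteq> {}" using zero_in_cond_cone by blast
  show "(\<lambda>y. a y + b y) \<in> cond_cone" if "a \<in> cond_cone" "b \<in> cond_cone" for a b
    using that by (rule cond_cone_add)
  show "(\<lambda>y. t * a y) \<in> cond_cone" if "a \<in> cond_cone" "0 \<le> t" for a and t :: real
    using that by (rule cond_cone_scale)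
  fix a b assume ab: "a \<in> Vpos B" "b \<in> Vpos B" and sum: "(\<lambda>y. a y + b y) \<in> cond_cone"
  then show "a \<in> cond_cone" by (rule cond_cone_hereditary)
  have "(\<lambda>y. b y + a y) \<in> cond_cone" using sum by (simp add: add.commute)
  then show "b \<in> cond_cone" using ab by (intro cond_cone_hereditary[of b a])
qed

end

theorem lemma6:
  fixes A :: "'x model" and B :: "'y model" and AB :: "'w model"
    and p :: "'x \<Rightarrow> 'y \<Rightarrow> 'w" and \<omega> :: "'w \<Rightarrow> real"
  assumes "non_signaling A B AB p"
    and "\<omega> \<in> states AB"
    and "steering A B p \<omega>"
  shows "cond_map A B p \<omega> ` Epos A = Face (Vpos B) (marg2 A B p \<omega>)"
proof -
  interpret steering_state A B AB p \<omega> using assms by unfold_locales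
  show ?thesis
    using Face_eqI[OF cond_cone_is_face marg2_in_cond_cone] cond_cone_dominated by simp
qed

end
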